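(* Let $I$ be a finite set with $|I|=n$. The linear map $\mathcal G:\mathbf M[I]\to\mathbb R[U_\alpha:\alpha\in\{0,1\}^n]$, $$\mathcal G(M)=\sum_{\ell}U_{\mathrm{rkjump}_M(\ell)},$$ summing over all linear orders $\ell=(\ell_1,\dots,\ell_n)$ of $I$, is a strong valuation on matroids: there is a linear map $\hat{\mathcal G}$ on the span of indicator functions of matroid polytopes of matroids on $I$ with $\mathcal G(M)=\hat{\mathcal G}(\mathbb 1_{P(M)})$ for every matroid $M$ on $I$.
   Context: A matroid $M$ on $I$ is a nonempty collection of subsets of $I$ (bases) satisfying the basis exchange axiom; its rank function is $\operatorname{rk}(J)=\max_B|J\cap B|$ over bases $B$. $\mathbf M[I]$ is the vector space with basis the matroids on $I$; $P(M)=\operatorname{conv}\{\sum_{b\in B}e_b: B\text{ a basis}\}$. For a linear order $\ell=(\ell_1,\dots,\ell_n)$ of $I$, $\mathrm{rkjump}_M(\ell)\in\{0,1\}^n$ has $i$-th entry $\operatorname{rk}(\{\ell_1,\dots,\ell_i\})-\operatorname{rk}(\{\ell_1,\dots,\ell_{i-1}\})$. The $U_\alpha$ are independent commuting variables indexed by $\{0,1\}^n$. *)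

theory Defs
  imports "HOL-Analysis.Analysis" "HOL-Library.Poly_Mapping"
begin

text \<open>Matroids on the ground set I, where I is taken to be the finite type 'a
  (i.e. I = UNIV). A matroid is given by its nonempty set of bases satisfying
  the basis exchange axiom.\<close>

definition is_matroid :: "'a set set \<Rightarrow> bool" where
  "is_matroid \<B> \<longleftrightarrow> \<B> \<noteq> {} \<and>
     (\<forall>B1\<in>\<B>. \<forall>B2\<in>\<B>. \<forall>x\<in>B1 - B2. \<exists>y\<in>B2 - B1. insert y (B1 - {x}) \<in> \<B>)"

definition mrank :: "'a set set \<Rightarrow> 'a set \<Rightarrow> nat" where
  "mrank \<B> J = Max ((\<lambda>B. card (J \<inter> B)) ` \<B>)"

definition linear_orders :: "'a::finite list set" where
  "linear_orders = {l. distinct l \<and> set l = UNIV}"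

definition rkjump :: "'a set set \<Rightarrow> 'a list \<Rightarrow> nat list" where
  "rkjump \<B> l = map (\<lambda>i. mrank \<B> (set (take (Suc i) l)) - mrank \<B> (set (take i l))) [0..<length l]"

definition ind_vec :: "'a::finite set \<Rightarrow> real ^ 'a" where
  "ind_vec B = (\<chi> i. if i \<in> B then 1 else 0)"

definition matroid_polytope :: "'a::finite set set \<Rightarrow> (real ^ 'a) set" where
  "matroid_polytope \<B> = convex hull (ind_vec ` \<B>)"

text \<open>The polynomial ring R[U_alpha] as finitely supported maps from monomials
  (finitely supported exponent vectors on the index type) to coefficients.\<close>

type_synonym 'v mpoly = "('v \<Rightarrow>\<^sub>0 nat) \<Rightarrow>\<^sub>0 real"

definition Var :: "'v \<Rightarrow> 'v mpoly" where
  "Var v = Poly_Mapping.single (Poly_Mapping.single v 1) 1"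

definition Const :: "real \<Rightarrow> 'v mpoly" where
  "Const c = Poly_Mapping.single 0 c"

definition G :: "'a::finite set set \<Rightarrow> nat list mpoly" where
  "G \<B> = (\<Sum>l\<in>linear_orders. Var (rkjump \<B> l))"

definition fspan :: "('x \<Rightarrow> real) set \<Rightarrow> ('x \<Rightarrow> real) set" where
  "fspan S = {(\<lambda>x. \<Sum>f\<in>F. c f * f x) | F c. finite F \<and> F \<subseteq> S}"

definition linear_on_fspan :: "('x \<Rightarrow> real) set \<Rightarrow> (('x \<Rightarrow> real) \<Rightarrow> 'v mpoly) \<Rightarrow> bool" where
  "linear_on_fspan V h \<longleftrightarrow>
     (\<forall>f\<in>V. \<forall>g\<in>V. h (\<lambda>x. f x + g x) = h f + h g) \<and>
     (\<forall>c. \<forall>f\<in>V. h (\<lambda>x. c * f x) = Const c * h f)"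

end

(* Weight the i-th prefix of a linear order l of the ground set by (n+1)^i. The
   resulting linear functional w_l attains its maximum over the matroid polytope P(M)
   at a greedy basis, and this maximum is the base-(n+1) encoding of the rank
   profile of l (the ranks of the prefixes of l), whose successive differences are
   the rank jumps. So for the Euler characteristic chi, the number
   chi(P(M) \<inter> {w_l \<ge> v}) - chi(P(M) \<inter> {w_l \<ge> v + 1}) is 1 exactly when v encodes the
   rank profile of l and 0 otherwise, which writes G(M) as a fixed linear
   combination of Euler characteristics of sections of P(M) by halfspaces.
   On compact convex sets chi is a valuation: every linear relation among indicator
   functions persists among the values of chi (slicing reduces this to dimension
   one, where it is read off at the right endpoints of intervals). Intersecting with
   a fixed halfspace preserves such relations, so the formula extends linearly to
   the span of the indicator functions of matroid polytopes. *)

theory Submission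
  imports Defs
begin

(* On compact convex sets, this is the Euler characteristic. *)
definition euler_char :: "'x set \<Rightarrow> real" where
  "euler_char K = (if K = {} then 0 else 1)"

lemma exists_gap_above:
  fixes E :: "real set"
  assumes "finite E" shows "\<exists>s>t. \<forall>e\<in>E. t < e \<longrightarrow> s < e"
  using assms
proof (induction rule: finite_induct)
  case empty show ?case by (intro exI[of _ "t + 1"]) auto
next
  case (insert x E)
  then obtain s where s: "s > t" "\<forall>e\<in>E. t < e \<longrightarrow> s < e" by blast
  show ?case
    by (rule exI[of _ "if t < x then min s ((t + x) / 2) else s"])
      (use s in \<open>auto simp: min_less_iff_disj\<close>)
qed

lemma sum_mult_indicator_Int:
  "(\<Sum>i\<in>I. c i * indicator (K i \<inter> H) x) = (\<Sum>i\<in>I. c i * indicator (K i) x) * (indicator H x :: real)"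
  by (simp add: indicator_inter_arith sum_distrib_right mult.assoc)

lemma compact_convex_real_interval:
  fixes S :: "real set"
  assumes "compact S" "convex S" obtains a b where "S = {a..b}"
proof -
  have "connected S \<and> compact S" using assms connected_convex_1 by blast
  then show ?thesis using connected_compact_interval_1 that by blast
qed

lemma euler_relation_intervals:
  fixes a b c :: "'i \<Rightarrow> real"
  assumes fin: "finite I" and rel: "\<And>t. (\<Sum>i\<in>I. c i * indicator {a i..b i} t) = 0"
  shows "(\<Sum>i\<in>I. c i * euler_char {a i..b i}) = 0"
proof -
  let ?N = "{i\<in>I. a i \<le> b i}"
  \<comment> \<open>Comparing the relation at t and just after t isolates the intervals ending at t.\<close>
  have right_end: "(\<Sum>i\<in>{i\<in>?N. b i = t}. c i) = 0" for t
  proof -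
    obtain s where "s > t" and s: "\<forall>e\<in>a ` I \<union> b ` I. t < e \<longrightarrow> s < e"
      using exists_gap_above[of "a ` I \<union> b ` I" t] fin by blast
    have jump: "indicator {a i..b i} t - indicator {a i..b i} s
        = (if i \<in> ?N \<and> b i = t then 1 else 0 :: real)" if "i \<in> I" for i
    proof -
      have "t < a i \<longrightarrow> s < a i" "t < b i \<longrightarrow> s < b i" using s that by auto
      then show ?thesis using \<open>s > t\<close> that by (auto simp: indicator_def)
    qed
    have "0 = (\<Sum>i\<in>I. c i * (indicator {a i..b i} t - indicator {a i..b i} s))"
      using rel[of t] rel[of s] by (simp add: right_diff_distrib sum_subtractf)
    also have "\<dots> = (\<Sum>i\<in>I. if a i \<le> b i \<and> b i = t then c i else 0)"
      by (intro sum.cong) (auto simp: jump)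
    also have "\<dots> = (\<Sum>i\<in>{i\<in>?N. b i = t}. c i)"
      using fin by (simp add: sum.inter_filter)
    finally show ?thesis by simp
  qed
  have "(\<Sum>i\<in>I. c i * euler_char {a i..b i}) = (\<Sum>i\<in>?N. c i)"
    using fin by (simp add: euler_char_def sum.inter_filter) (intro sum.cong; simp)
  also have "\<dots> = (\<Sum>t\<in>b ` ?N. \<Sum>i\<in>{i\<in>?N. b i = t}. c i)"
    using fin by (intro sum.group[symmetric]) auto
  also have "\<dots> = 0" using right_end by simp
  finally show ?thesis .
qed

lemma euler_relation_real:
  fixes S :: "'i \<Rightarrow> real set"
  assumes fin: "finite I" and cc: "\<And>i. i \<in> I \<Longrightarrow> compact (S i) \<and> convex (S i)"
    and rel: "\<And>t. (\<Sum>i\<in>I. c i * indicator (S i) t) = 0"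
  shows "(\<Sum>i\<in>I. c i * euler_char (S i)) = 0"
proof -
  have "\<forall>i\<in>I. \<exists>a b. S i = {a..b}" using compact_convex_real_interval cc by meson
  then obtain a b where ab: "\<And>i. i \<in> I \<Longrightarrow> S i = {a i..b i}" by metis
  have "(\<Sum>i\<in>I. c i * euler_char {a i..b i}) = 0"
  proof (rule euler_relation_intervals[OF fin])
    show "(\<Sum>i\<in>I. c i * indicator {a i..b i} t) = 0" for t
      using rel[of t] ab by (simp cong: sum.cong)
  qed
  then show ?thesis using ab by (simp cong: sum.cong)
qed

(* Induction on the coordinates not frozen to those of a: the slice x$k = t of K i
   is nonempty iff t lies in the projection of K i to coordinate k, so the
   one-dimensional case applies to the projections. *)
lemma euler_relation_flat:
  fixes K :: "'i \<Rightarrow> (real^'n) set"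
  assumes "finite D" and "finite I"
    and "\<And>i. i \<in> I
      \<Longrightarrow> compact (K i) \<and> convex (K i) \<and> K i \<subseteq> {x. \<forall>j. j \<notin> D \<longrightarrow> x$j = a$j}"
    and "\<And>x. (\<Sum>i\<in>I. c i * indicator (K i) x) = 0"
  shows "(\<Sum>i\<in>I. c i * euler_char (K i)) = 0"
  using assms
proof (induction D arbitrary: a K rule: finite_induct)
  case empty
  have "euler_char (K i) = indicator (K i) a" if "i \<in> I" for i
  proof -
    have "K i \<subseteq> {a}" using empty.prems(2)[OF that] by (auto simp: vec_eq_iff)
    then consider "K i = {}" | "K i = {a}" by blast
    then show ?thesis by cases (simp_all add: euler_char_def)
  qed
  then have "(\<Sum>i\<in>I. c i * euler_char (K i)) = (\<Sum>i\<in>I. c i * indicator (K i) a)"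
    by simp
  then show ?case using empty.prems(3) by simp
next
  case (insert k D)
  let ?proj = "\<lambda>i. (\<lambda>x. x$k) ` K i"
  have "(\<Sum>i\<in>I. c i * euler_char (?proj i)) = 0"
  proof (rule euler_relation_real[OF insert.prems(1)])
    show "compact (?proj i) \<and> convex (?proj i)" if "i \<in> I" for i
    proof
      show "compact (?proj i)"
        using insert.prems(2)[OF that] by (intro compact_continuous_image continuous_intros) auto
      show "convex (?proj i)"
        using insert.prems(2)[OF that] bounded_linear_vec_nth[THEN bounded_linear.linear]
        by (intro convex_linear_image) auto
    qed
    fix t
    let ?H = "{x. x$k = t}" and ?slice = "\<lambda>i. K i \<inter> {x. x$k = t}"
    have "closed ?H" by (intro closed_Collect_eq continuous_intros)
    have "convex ?H" by (auto simp: convex_def simp flip: distrib_right)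
    have "(\<Sum>i\<in>I. c i * euler_char (?slice i)) = 0"
    proof (rule insert.IH[OF insert.prems(1), where a = "\<chi> j. if j = k then t else a$j"])
      show "compact (?slice i) \<and> convex (?slice i)
          \<and> ?slice i \<subseteq> {x. \<forall>j. j \<notin> D \<longrightarrow> x$j = (\<chi> j. if j = k then t else a$j)$j}"
        if "i \<in> I" for i
      proof (intro conjI subsetI CollectI allI impI)
        note Ki = insert.prems(2)[OF that]
        show "compact (?slice i)" using Ki \<open>closed ?H\<close> by (simp add: compact_Int_closed)
        show "convex (?slice i)" using Ki \<open>convex ?H\<close> by (simp add: convex_Int)
        fix x j assume "x \<in> ?slice i" "j \<notin> D"
        then show "x$j = (\<chi> j. if j = k then t else a$j)$j" using Ki by (cases "j = k") auto
      qed
      show "(\<Sum>i\<in>I. c i * indicator (?slice i) x) = 0" for x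
        using insert.prems(3) by (simp only: sum_mult_indicator_Int mult_zero_left)
    qed
    moreover have "euler_char (?slice i) = indicator (?proj i) t" for i
      by (auto simp: euler_char_def indicator_def)
    ultimately show "(\<Sum>i\<in>I. c i * indicator (?proj i) t) = 0" by simp
  qed
  moreover have "euler_char (?proj i) = euler_char (K i)" for i
    by (simp add: euler_char_def)
  ultimately show ?case by simp
qed

lemma euler_relation:
  fixes K :: "'i \<Rightarrow> (real^'n) set"
  assumes "finite I" and "\<And>i. i \<in> I \<Longrightarrow> compact (K i) \<and> convex (K i)"
    and "\<And>x. (\<Sum>i\<in>I. c i * indicator (K i) x) = 0"
  shows "(\<Sum>i\<in>I. c i * euler_char (K i)) = 0"
  using euler_relation_flat[of UNIV I K 0 c] assms by auto

lemma euler_relation_Int: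
  fixes K :: "'i \<Rightarrow> (real^'n) set"
  assumes "finite I" and cc: "\<And>i. i \<in> I \<Longrightarrow> compact (K i) \<and> convex (K i)"
    and "closed H" "convex H"
    and rel: "\<And>x. (\<Sum>i\<in>I. c i * indicator (K i) x) = 0"
  shows "(\<Sum>i\<in>I. c i * euler_char (K i \<inter> H)) = 0"
proof (rule euler_relation[OF assms(1)])
  show "compact (K i \<inter> H) \<and> convex (K i \<inter> H)" if "i \<in> I" for i
    using cc[OF that] assms(3,4) by (simp add: compact_Int_closed convex_Int)
  show "(\<Sum>i\<in>I. c i * indicator (K i \<inter> H) x) = 0" for x
    using rel by (simp only: sum_mult_indicator_Int mult_zero_left)
qed

lemma Const_add: "Const (a + b) = Const a + Const b"
  by (simp add: Const_def single_add)

lemma Const_mult: "Const (a * b) = Const a * Const b"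
  by (simp add: Const_def mult_single)

lemma Const_0 [simp]: "Const 0 = 0"
  by (simp add: Const_def)

lemma Const_1 [simp]: "Const 1 = 1"
  by (simp add: Const_def)

lemma Const_diff: "Const (a - b) = Const a - Const b"
  by (simp add: Const_def single_diff)

lemma Const_sum: "Const (\<Sum>i\<in>A. f i) = (\<Sum>i\<in>A. Const (f i))"
  by (induction A rule: infinite_finite_induct) (simp_all add: Const_add)

definition lincomb :: "('x \<Rightarrow> real) set \<Rightarrow> (('x \<Rightarrow> real) \<Rightarrow> real) \<Rightarrow> 'x \<Rightarrow> real" where
  "lincomb F c = (\<lambda>x. \<Sum>f\<in>F. c f * f x)"

lemma fspan_lincomb: "fspan S = {lincomb F c | F c. finite F \<and> F \<subseteq> S}"
  by (simp add: fspan_def lincomb_def)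

lemma sum_extend_by_zero:
  fixes c :: "'f \<Rightarrow> 'b::semiring_0"
  assumes "finite A" "F \<subseteq> A"
  shows "(\<Sum>f\<in>A. (if f \<in> F then c f else 0) * g f) = (\<Sum>f\<in>F. c f * g f)"
proof -
  have "(\<Sum>f\<in>A. (if f \<in> F then c f else 0) * g f) = (\<Sum>f\<in>A. if f \<in> F then c f * g f else 0)"
    by (intro sum.cong) auto
  also have "\<dots> = (\<Sum>f\<in>F. c f * g f)"
    using assms by (simp add: sum.inter_restrict[symmetric] Int_absorb1)
  finally show ?thesis .
qed

lemma lincomb_extend_by_zero:
  "finite A \<Longrightarrow> F \<subseteq> A \<Longrightarrow> lincomb A (\<lambda>f. if f \<in> F then c f else 0) = lincomb F c"
  by (simp add: lincomb_def sum_extend_by_zero)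

lemma sum_Const_extend_by_zero:
  "finite A \<Longrightarrow> F \<subseteq> A
    \<Longrightarrow> (\<Sum>f\<in>A. Const (if f \<in> F then c f else 0) * \<phi> f) = (\<Sum>f\<in>F. Const (c f) * \<phi> f)"
  using sum_extend_by_zero[of A F "\<lambda>f. Const (c f)" \<phi>] by (simp add: if_distrib[of Const] cong: if_cong)

lemma lincomb_add: "lincomb F (\<lambda>f. c f + d f) = (\<lambda>x. lincomb F c x + lincomb F d x)"
  by (simp add: lincomb_def distrib_right sum.distrib)

lemma lincomb_diff: "lincomb F (\<lambda>f. c f - d f) = (\<lambda>x. lincomb F c x - lincomb F d x)"
  by (simp add: lincomb_def left_diff_distrib sum_subtractf)

lemma lincomb_scale: "lincomb F (\<lambda>f. a * c f) = (\<lambda>x. a * lincomb F c x)"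
  by (simp add: lincomb_def sum_distrib_left mult.assoc)

lemma relation_respecting_value_unique:
  fixes \<phi> :: "('x \<Rightarrow> real) \<Rightarrow> 'v mpoly"
  assumes rel: "\<And>F c. finite F \<Longrightarrow> F \<subseteq> S \<Longrightarrow> lincomb F c = (\<lambda>_. 0)
      \<Longrightarrow> (\<Sum>f\<in>F. Const (c f) * \<phi> f) = 0"
    and F: "finite F1" "F1 \<subseteq> S" "finite F2" "F2 \<subseteq> S"
    and eq: "lincomb F1 c1 = lincomb F2 c2"
  shows "(\<Sum>f\<in>F1. Const (c1 f) * \<phi> f) = (\<Sum>f\<in>F2. Const (c2 f) * \<phi> f)"
proof -
  let ?F = "F1 \<union> F2"
  let ?e1 = "\<lambda>f. if f \<in> F1 then c1 f else 0" and ?e2 = "\<lambda>f. if f \<in> F2 then c2 f else 0"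
  have "finite ?F" "F1 \<subseteq> ?F" "F2 \<subseteq> ?F" "?F \<subseteq> S" using F by auto
  note ext = lincomb_extend_by_zero[OF \<open>finite ?F\<close>] sum_Const_extend_by_zero[OF \<open>finite ?F\<close>]
  have "lincomb ?F (\<lambda>f. ?e1 f - ?e2 f) = (\<lambda>_. 0)"
    unfolding lincomb_diff ext(1)[OF \<open>F1 \<subseteq> ?F\<close>] ext(1)[OF \<open>F2 \<subseteq> ?F\<close>] eq by simp
  then have "(\<Sum>f\<in>?F. Const (?e1 f - ?e2 f) * \<phi> f) = 0"
    using rel \<open>finite ?F\<close> \<open>?F \<subseteq> S\<close> by blast
  then have "(\<Sum>f\<in>?F. Const (?e1 f) * \<phi> f) = (\<Sum>f\<in>?F. Const (?e2 f) * \<phi> f)"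
    by (simp add: Const_diff left_diff_distrib sum_subtractf)
  then show ?thesis unfolding ext(2)[OF \<open>F1 \<subseteq> ?F\<close>] ext(2)[OF \<open>F2 \<subseteq> ?F\<close>] .
qed

lemma linear_extension_to_fspan:
  fixes \<phi> :: "('x \<Rightarrow> real) \<Rightarrow> 'v mpoly"
  assumes rel: "\<And>F c. finite F \<Longrightarrow> F \<subseteq> S \<Longrightarrow> lincomb F c = (\<lambda>_. 0)
      \<Longrightarrow> (\<Sum>f\<in>F. Const (c f) * \<phi> f) = 0"
  shows "\<exists>\<Phi>. linear_on_fspan (fspan S) \<Phi> \<and> (\<forall>f\<in>S. \<Phi> f = \<phi> f)"
proof -
  define \<Phi> where "\<Phi> h = (SOME p. \<exists>F c. finite F \<and> F \<subseteq> S \<and> h = lincomb F c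
      \<and> p = (\<Sum>f\<in>F. Const (c f) * \<phi> f))" for h
  have \<Phi>_lincomb: "\<Phi> (lincomb F c) = (\<Sum>f\<in>F. Const (c f) * \<phi> f)" if "finite F" "F \<subseteq> S" for F c
  proof -
    let ?P = "\<lambda>p. \<exists>F' c'. finite F' \<and> F' \<subseteq> S \<and> lincomb F c = lincomb F' c'
        \<and> p = (\<Sum>f\<in>F'. Const (c' f) * \<phi> f)"
    have "?P (\<Sum>f\<in>F. Const (c f) * \<phi> f)" using that by blast
    then have "?P (\<Phi> (lincomb F c))" unfolding \<Phi>_def by (rule someI)
    then obtain F' c' where F': "finite F'" "F' \<subseteq> S" "lincomb F c = lincomb F' c'"
      and "\<Phi> (lincomb F c) = (\<Sum>f\<in>F'. Const (c' f) * \<phi> f)" by blast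
    with relation_respecting_value_unique[OF rel that F'] show ?thesis by (simp only:)
  qed
  have "linear_on_fspan (fspan S) \<Phi>"
    unfolding linear_on_fspan_def fspan_lincomb
  proof (intro conjI ballI allI)
    fix h1 h2 assume "h1 \<in> {lincomb F c |F c. finite F \<and> F \<subseteq> S}" "h2 \<in> {lincomb F c |F c. finite F \<and> F \<subseteq> S}"
    then obtain F1 c1 F2 c2 where h: "h1 = lincomb F1 c1" "h2 = lincomb F2 c2"
      and F: "finite F1" "F1 \<subseteq> S" "finite F2" "F2 \<subseteq> S" by blast
    let ?F = "F1 \<union> F2"
    let ?e1 = "\<lambda>f. if f \<in> F1 then c1 f else 0" and ?e2 = "\<lambda>f. if f \<in> F2 then c2 f else 0"
    have "finite ?F" "F1 \<subseteq> ?F" "F2 \<subseteq> ?F" "?F \<subseteq> S" using F by auto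
    note ext = lincomb_extend_by_zero[OF \<open>finite ?F\<close>] sum_Const_extend_by_zero[OF \<open>finite ?F\<close>]
    have "(\<lambda>x. h1 x + h2 x) = lincomb ?F (\<lambda>f. ?e1 f + ?e2 f)"
      unfolding lincomb_add ext(1)[OF \<open>F1 \<subseteq> ?F\<close>] ext(1)[OF \<open>F2 \<subseteq> ?F\<close>] h ..
    then have "\<Phi> (\<lambda>x. h1 x + h2 x) = (\<Sum>f\<in>?F. Const (?e1 f) * \<phi> f) + (\<Sum>f\<in>?F. Const (?e2 f) * \<phi> f)"
      using \<Phi>_lincomb[OF \<open>finite ?F\<close> \<open>?F \<subseteq> S\<close>] by (simp add: Const_add distrib_right sum.distrib)
    then show "\<Phi> (\<lambda>x. h1 x + h2 x) = \<Phi> h1 + \<Phi> h2"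
      unfolding ext(2)[OF \<open>F1 \<subseteq> ?F\<close>] ext(2)[OF \<open>F2 \<subseteq> ?F\<close>] h using F by (simp add: \<Phi>_lincomb)
  next
    fix a h assume "h \<in> {lincomb F c |F c. finite F \<and> F \<subseteq> S}"
    then obtain F c where "h = lincomb F c" "finite F" "F \<subseteq> S" by blast
    then show "\<Phi> (\<lambda>x. a * h x) = Const a * \<Phi> h"
      by (simp add: lincomb_scale[symmetric] \<Phi>_lincomb Const_mult sum_distrib_left mult.assoc)
  qed
  moreover have "\<Phi> f = \<phi> f" if "f \<in> S" for f
    using \<Phi>_lincomb[of "{f}" "\<lambda>_. 1"] that by (simp add: lincomb_def)
  ultimately show ?thesis by blast
qed

lemma sum_Const_mult_expansion:
  "(\<Sum>f\<in>F. Const (c f) * (\<Sum>l\<in>L. \<Sum>r\<in>R. Const (a f l r) * v l r))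
    = (\<Sum>l\<in>L. \<Sum>r\<in>R. Const (\<Sum>f\<in>F. c f * a f l r) * v l r)"
proof -
  have "(\<Sum>f\<in>F. Const (c f) * (\<Sum>l\<in>L. \<Sum>r\<in>R. Const (a f l r) * v l r))
      = (\<Sum>f\<in>F. \<Sum>l\<in>L. \<Sum>r\<in>R. Const (c f * a f l r) * v l r)"
    by (simp add: sum_distrib_left Const_mult mult.assoc)
  also have "\<dots> = (\<Sum>l\<in>L. \<Sum>f\<in>F. \<Sum>r\<in>R. Const (c f * a f l r) * v l r)"
    by (rule sum.swap)
  also have "\<dots> = (\<Sum>l\<in>L. \<Sum>r\<in>R. \<Sum>f\<in>F. Const (c f * a f l r) * v l r)"
    by (intro sum.cong refl) (rule sum.swap)
  also have "\<dots> = (\<Sum>l\<in>L. \<Sum>r\<in>R. Const (\<Sum>f\<in>F. c f * a f l r) * v l r)"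
    by (simp add: Const_sum sum_distrib_right)
  finally show ?thesis .
qed

lemma matroid_exchange:
  assumes "is_matroid \<B>" "B1 \<in> \<B>" "B2 \<in> \<B>" "x \<in> B1 - B2"
  obtains y where "y \<in> B2 - B1" "insert y (B1 - {x}) \<in> \<B>"
  using assms unfolding is_matroid_def by blast

lemma card_Int_le_mrank:
  fixes \<B> :: "'a::finite set set"
  assumes "B \<in> \<B>" shows "card (S \<inter> B) \<le> mrank \<B> S"
  unfolding mrank_def using assms by (intro Max_ge) auto

lemma mrank_attained:
  fixes \<B> :: "'a::finite set set"
  assumes "\<B> \<noteq> {}" obtains B where "B \<in> \<B>" "card (S \<inter> B) = mrank \<B> S"
proof -
  have "mrank \<B> S \<in> (\<lambda>B. card (S \<inter> B)) ` \<B>" unfolding mrank_def using assms by (intro Max_in) auto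
  then show ?thesis using that by auto
qed

lemma mrank_le_card:
  fixes \<B> :: "'a::finite set set"
  assumes "\<B> \<noteq> {}" shows "mrank \<B> S \<le> CARD('a)"
proof -
  obtain B where "B \<in> \<B>" "card (S \<inter> B) = mrank \<B> S" using mrank_attained[OF assms] .
  moreover have "card (S \<inter> B) \<le> CARD('a)" by (rule card_mono) auto
  ultimately show ?thesis by simp
qed

lemma exchange_step_card:
  fixes B1 B2 :: "'a::finite set"
  assumes "x \<in> B1 - B2" "y \<in> B2 - B1"
  shows "card (insert y (B1 - {x}) - B2) < card (B1 - B2)"
proof -
  have "insert y (B1 - {x}) - B2 = (B1 - B2) - {x}" using assms by auto
  moreover have "card (B1 - B2) > 0" using assms(1) by (auto simp: card_gt_0_iff)
  ultimately show ?thesis using assms(1) by simp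
qed

lemma matroid_bases_card_eq:
  fixes \<B> :: "'a::finite set set"
  assumes M: "is_matroid \<B>"
  shows "B1 \<in> \<B> \<Longrightarrow> B2 \<in> \<B> \<Longrightarrow> card B1 = card B2"
proof (induction "card (B1 - B2)" arbitrary: B1 rule: less_induct)
  case less
  show ?case
  proof (cases "B1 - B2 = {}")
    case True
    have "B2 - B1 = {}"
    proof (rule ccontr)
      assume "B2 - B1 \<noteq> {}"
      then obtain x where "x \<in> B2 - B1" by auto
      with matroid_exchange[OF M less.prems(2,1)] True show False by blast
    qed
    with True have "B1 = B2" by auto
    then show ?thesis by simp
  next
    case False
    then obtain x where x: "x \<in> B1 - B2" by auto
    obtain y where y: "y \<in> B2 - B1" "insert y (B1 - {x}) \<in> \<B>"
      using matroid_exchange[OF M less.prems x] .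
    have "card B1 > 0" using x by (auto simp: card_gt_0_iff)
    then have "card (insert y (B1 - {x})) = card B1"
      using x y by (simp add: card_insert_disjoint card_Diff_singleton)
    then show ?thesis
      using less.hyps[OF exchange_step_card[OF x y(1)] y(2) less.prems(2)] by simp
  qed
qed

lemma better_base_differing_inside:
  fixes \<B> :: "'a::finite set set"
  assumes M: "is_matroid \<B>" and B: "B \<in> \<B>"
  shows "B' \<in> \<B> \<Longrightarrow> card (T \<inter> B) < card (T \<inter> B')
    \<Longrightarrow> \<exists>B''\<in>\<B>. B'' - B \<subseteq> T \<and> card (T \<inter> B) < card (T \<inter> B'')"
proof (induction "card (B' - B)" arbitrary: B' rule: less_induct)
  case less
  show ?case
  proof (cases "B' - B \<subseteq> T")
    case True
    then show ?thesis using less.prems by blast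
  next
    case False
    then obtain x where x: "x \<in> B' - B" "x \<notin> T" by auto
    obtain y where y: "y \<in> B - B'" "insert y (B' - {x}) \<in> \<B>"
      using matroid_exchange[OF M less.prems(1) B x(1)] .
    have "card (T \<inter> B') \<le> card (T \<inter> insert y (B' - {x}))"
      using x by (intro card_mono) auto
    then show ?thesis
      using less.hyps[OF exchange_step_card[OF x(1) y(1)] y(2)] less.prems(2) by simp
  qed
qed

lemma base_has_element_outside:
  fixes \<B> :: "'a::finite set set"
  assumes M: "is_matroid \<B>" and B: "B \<in> \<B>" "B' \<in> \<B>"
    and inside: "B' - B \<subseteq> T" and more: "card (T \<inter> B) < card (T \<inter> B')"
  shows "\<exists>z\<in>B - B'. z \<notin> T"
proof (rule ccontr)
  assume "\<not> (\<exists>z\<in>B - B'. z \<notin> T)"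
  then have split: "T \<inter> B = (T \<inter> B' \<inter> B) \<union> (B - B')" "T \<inter> B' = (T \<inter> B' \<inter> B) \<union> (B' - B)"
    using inside by auto
  have "card (T \<inter> B) = card (T \<inter> B' \<inter> B) + card (B - B')"
    by (subst split(1), rule card_Un_disjoint) auto
  moreover have "card (T \<inter> B') = card (T \<inter> B' \<inter> B) + card (B' - B)"
    by (subst split(2), rule card_Un_disjoint) auto
  moreover have "card (B' - B) = card (B - B')"
    using matroid_bases_card_eq[OF M B] by (simp add: card_Diff_subset_Int Int_commute)
  ultimately show False using more by simp
qed

lemma improve_base_on_chain:
  fixes \<B> :: "'a::finite set set" and S :: "nat \<Rightarrow> 'a set"
  assumes M: "is_matroid \<B>" and mono: "\<And>i j. i \<le> j \<Longrightarrow> S i \<subseteq> S j"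
    and B: "B \<in> \<B>" and opt: "\<forall>i<m. card (S i \<inter> B) = mrank \<B> (S i)"
    and lt: "card (S m \<inter> B) < mrank \<B> (S m)"
  shows "\<exists>B'\<in>\<B>. (\<forall>i<m. card (S i \<inter> B') = mrank \<B> (S i)) \<and> card (S m \<inter> B) < card (S m \<inter> B')"
proof -
  let ?T = "S m"
  obtain B\<^sub>0 where "B\<^sub>0 \<in> \<B>" "card (?T \<inter> B\<^sub>0) = mrank \<B> ?T"
    using mrank_attained B by blast
  then obtain B'' where B'': "B'' \<in> \<B>" "B'' - B \<subseteq> ?T" "card (?T \<inter> B) < card (?T \<inter> B'')"
    using better_base_differing_inside[OF M B] lt by metis
  obtain z where z: "z \<in> B - B''" "z \<notin> ?T"
    using base_has_element_outside[OF M B B''] by blast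
  obtain y where y: "y \<in> B'' - B" "insert y (B - {z}) \<in> \<B>"
    using matroid_exchange[OF M B B''(1) z(1)] .
  let ?B' = "insert y (B - {z})"
  have "card (S i \<inter> ?B') = mrank \<B> (S i)" if "i < m" for i
  proof -
    have "S i \<inter> B \<subseteq> S i \<inter> ?B'" using mono[of i m] that z by auto
    then have "card (S i \<inter> B) \<le> card (S i \<inter> ?B')" by (intro card_mono) auto
    with card_Int_le_mrank[OF y(2)] opt that show ?thesis by (metis le_antisym)
  qed
  moreover have "?T \<inter> ?B' = insert y (?T \<inter> B)" using z y B''(2) by auto
  then have "card (?T \<inter> ?B') = Suc (card (?T \<inter> B))" using y(1) by (simp add: card_insert_disjoint)
  ultimately show ?thesis using y(2) by (intro bexI[of _ ?B']) auto
qed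

lemma base_optimal_on_chain_step:
  fixes \<B> :: "'a::finite set set" and S :: "nat \<Rightarrow> 'a set"
  assumes M: "is_matroid \<B>" and mono: "\<And>i j. i \<le> j \<Longrightarrow> S i \<subseteq> S j"
  shows "B \<in> \<B> \<Longrightarrow> \<forall>i<m. card (S i \<inter> B) = mrank \<B> (S i)
    \<Longrightarrow> \<exists>B'\<in>\<B>. \<forall>i\<le>m. card (S i \<inter> B') = mrank \<B> (S i)"
proof (induction "mrank \<B> (S m) - card (S m \<inter> B)" arbitrary: B rule: less_induct)
  case less
  show ?case
  proof (cases "card (S m \<inter> B) < mrank \<B> (S m)")
    case False
    then have "card (S m \<inter> B) = mrank \<B> (S m)"
      using card_Int_le_mrank[OF less.prems(1)] by (meson le_antisym not_less)
    then show ?thesis using less.prems by (metis le_neq_implies_less)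
  next
    case True
    then obtain B' where B': "B' \<in> \<B>" "\<forall>i<m. card (S i \<inter> B') = mrank \<B> (S i)"
      "card (S m \<inter> B) < card (S m \<inter> B')"
      using improve_base_on_chain[OF M mono less.prems] by blast
    have "mrank \<B> (S m) - card (S m \<inter> B') < mrank \<B> (S m) - card (S m \<inter> B)"
      using card_Int_le_mrank[OF B'(1)] B'(3) True by simp
    from less.hyps[OF this B'(1,2)] show ?thesis .
  qed
qed

lemma base_optimal_on_chain:
  fixes \<B> :: "'a::finite set set" and S :: "nat \<Rightarrow> 'a set"
  assumes M: "is_matroid \<B>" and mono: "\<And>i j. i \<le> j \<Longrightarrow> S i \<subseteq> S j"
  shows "\<exists>B\<in>\<B>. \<forall>i\<le>m. card (S i \<inter> B) = mrank \<B> (S i)"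
proof (induction m)
  case 0
  obtain B where "B \<in> \<B>" using M unfolding is_matroid_def by auto
  then show ?case using base_optimal_on_chain_step[OF M mono, where B = B and m = 0] by simp
next
  case (Suc m)
  then show ?case using base_optimal_on_chain_step[OF M mono, where m = "Suc m"] by (auto simp: less_Suc_eq_le)
qed

(* The i-th prefix of l gets weight (n+1)^i, so the weight of a basis B encodes the
   numbers card (prefix_i \<inter> B) as digits in base n+1. *)
definition prefix_weight :: "'a::finite list \<Rightarrow> real^'a" where
  "prefix_weight l = (\<chi> j. \<Sum>i<Suc CARD('a). real (Suc CARD('a) ^ i) * (if j \<in> set (take i l) then 1 else 0))"

definition weight_halfspace :: "'a::finite list \<Rightarrow> nat \<Rightarrow> (real^'a) set" where
  "weight_halfspace l c = {x. real c \<le> prefix_weight l \<bullet> x}"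

definition rank_profile :: "'a::finite set set \<Rightarrow> 'a list \<Rightarrow> nat list" where
  "rank_profile \<B> l = map (\<lambda>i. mrank \<B> (set (take i l))) [0..<Suc CARD('a)]"

definition base_value :: "nat \<Rightarrow> nat list \<Rightarrow> nat" where
  "base_value N r = (\<Sum>i<length r. N ^ i * r ! i)"

definition digit_lists :: "nat \<Rightarrow> nat list set" where
  "digit_lists N = {r. set r \<subseteq> {..<N} \<and> length r = N}"

definition jumps :: "nat list \<Rightarrow> nat list" where
  "jumps r = map (\<lambda>i. r ! Suc i - r ! i) [0..<length r - 1]"

lemma prefix_weight_inner_ind_vec:
  "prefix_weight l \<bullet> ind_vec B
    = real (\<Sum>i<Suc CARD('a). Suc CARD('a) ^ i * card (set (take i (l :: 'a::finite list)) \<inter> B))"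
proof -
  let ?N = "Suc CARD('a)"
  have count: "(\<Sum>j\<in>UNIV. if j \<in> A then 1 else 0) = real (card (A :: 'a set))" for A
    by (simp add: sum.If_cases)
  have "prefix_weight l \<bullet> ind_vec B = (\<Sum>j\<in>UNIV.
      (\<Sum>i<?N. real (?N ^ i) * (if j \<in> set (take i l) then 1 else 0)) * (if j \<in> B then 1 else 0))"
    unfolding inner_vec_def prefix_weight_def ind_vec_def by simp
  also have "\<dots> = (\<Sum>j\<in>UNIV. \<Sum>i<?N. real (?N ^ i) * (if j \<in> set (take i l) \<inter> B then 1 else 0))"
    by (intro sum.cong refl) (auto simp: sum_distrib_right)
  also have "\<dots> = (\<Sum>i<?N. \<Sum>j\<in>UNIV. real (?N ^ i) * (if j \<in> set (take i l) \<inter> B then 1 else 0))"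
    by (rule sum.swap)
  also have "\<dots> = (\<Sum>i<?N. real (?N ^ i) * real (card (set (take i l) \<inter> B)))"
    by (intro sum.cong refl) (simp only: sum_distrib_left[symmetric] count)
  finally show ?thesis by simp
qed

lemma base_value_rank_profile:
  "base_value (Suc CARD('a)) (rank_profile \<B> l)
    = (\<Sum>i<Suc CARD('a). Suc CARD('a) ^ i * mrank \<B> (set (take i (l :: 'a::finite list))))"
  unfolding base_value_def rank_profile_def by (intro sum.cong) (auto simp del: upt_Suc)

lemma base_value_Cons: "base_value N (a # r) = a + N * base_value N r"
  unfolding base_value_def
  by (simp only: length_Cons sum.lessThan_Suc_shift) (simp add: sum_distrib_left algebra_simps)

lemma base_value_inj:
  "length r = length s \<Longrightarrow> set r \<subseteq> {..<N} \<Longrightarrow> set s \<subseteq> {..<N}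
    \<Longrightarrow> base_value N r = base_value N s \<Longrightarrow> r = s"
proof (induction r arbitrary: s)
  case Nil
  then show ?case by simp
next
  case (Cons a r)
  then obtain b s' where s: "s = b # s'" by (cases s) auto
  have "a < N" "b < N" using Cons.prems s by auto
  moreover have e: "a + N * base_value N r = b + N * base_value N s'"
    using Cons.prems(4) s by (simp add: base_value_Cons)
  ultimately have "a = b" by (metis mod_mult_self2 mod_less)
  with e have "base_value N r = base_value N s'" using \<open>a < N\<close> by simp
  then show ?case using Cons.IH[of s'] Cons.prems s \<open>a = b\<close> by auto
qed

lemma rank_profile_in_digit_lists:
  fixes \<B> :: "'a::finite set set"
  shows "is_matroid \<B> \<Longrightarrow> rank_profile \<B> l \<in> digit_lists (Suc CARD('a))"
  unfolding rank_profile_def digit_lists_def is_matroid_def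
  using mrank_le_card[of \<B>] by (auto simp del: upt_Suc simp: less_Suc_eq_le)

lemma length_linear_order: "l \<in> linear_orders \<Longrightarrow> length (l :: 'a::finite list) = CARD('a)"
  unfolding linear_orders_def using distinct_card by fastforce

lemma jumps_rank_profile:
  assumes "l \<in> linear_orders" shows "jumps (rank_profile \<B> l) = rkjump \<B> l"
  unfolding jumps_def rank_profile_def rkjump_def length_linear_order[OF assms]
  by (intro map_cong) (auto simp del: upt_Suc)

lemma compact_matroid_polytope: "compact (matroid_polytope (\<B> :: 'a::finite set set))"
  unfolding matroid_polytope_def by (intro compact_convex_hull finite_imp_compact) auto

lemma convex_matroid_polytope: "convex (matroid_polytope \<B>)"
  unfolding matroid_polytope_def by simp

lemma closed_weight_halfspace: "closed (weight_halfspace l c)"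
  unfolding weight_halfspace_def by (rule closed_halfspace_ge)

lemma convex_weight_halfspace: "convex (weight_halfspace l c)"
  unfolding weight_halfspace_def by (rule convex_halfspace_ge)

lemma matroid_polytope_meets_weight_halfspace_iff:
  fixes \<B> :: "'a::finite set set"
  assumes M: "is_matroid \<B>"
  shows "matroid_polytope \<B> \<inter> weight_halfspace l c \<noteq> {}
    \<longleftrightarrow> c \<le> base_value (Suc CARD('a)) (rank_profile \<B> l)"
proof
  assume ne: "matroid_polytope \<B> \<inter> weight_halfspace l c \<noteq> {}"
  show "c \<le> base_value (Suc CARD('a)) (rank_profile \<B> l)"
  proof (rule ccontr)
    assume gt: "\<not> ?thesis"
    have "prefix_weight l \<bullet> ind_vec B < real c" if "B \<in> \<B>" for B
    proof -
      have "(\<Sum>i<Suc CARD('a). Suc CARD('a) ^ i * card (set (take i l) \<inter> B))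
          \<le> base_value (Suc CARD('a)) (rank_profile \<B> l)"
        unfolding base_value_rank_profile
        using card_Int_le_mrank[OF that] by (intro sum_mono mult_le_mono2)
      then show ?thesis using gt by (simp only: prefix_weight_inner_ind_vec of_nat_less_iff)
    qed
    then have "ind_vec ` \<B> \<subseteq> {x. prefix_weight l \<bullet> x < real c}" by auto
    then have "matroid_polytope \<B> \<subseteq> {x. prefix_weight l \<bullet> x < real c}"
      unfolding matroid_polytope_def by (intro hull_minimal convex_halfspace_lt)
    then show False using ne unfolding weight_halfspace_def by auto
  qed
next
  assume le: "c \<le> base_value (Suc CARD('a)) (rank_profile \<B> l)"
  have "\<And>i j. i \<le> j \<Longrightarrow> set (take i l) \<subseteq> set (take j l)"
    by (rule set_take_subset_set_take)
  from base_optimal_on_chain[OF M this, where m = "CARD('a)"]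
  obtain B where B: "B \<in> \<B>" "\<forall>i\<le>CARD('a). card (set (take i l) \<inter> B) = mrank \<B> (set (take i l))"
    ..
  have "ind_vec B \<in> matroid_polytope \<B>"
    unfolding matroid_polytope_def using B(1) by (intro hull_inc) auto
  moreover have "(\<Sum>i<Suc CARD('a). Suc CARD('a) ^ i * card (set (take i l) \<inter> B))
      = base_value (Suc CARD('a)) (rank_profile \<B> l)"
    unfolding base_value_rank_profile using B(2) by (intro sum.cong refl) (simp add: less_Suc_eq_le)
  then have "ind_vec B \<in> weight_halfspace l c"
    using le unfolding weight_halfspace_def
    by (simp only: mem_Collect_eq prefix_weight_inner_ind_vec of_nat_le_iff)
  ultimately show "matroid_polytope \<B> \<inter> weight_halfspace l c \<noteq> {}" by blast
qed

definition profile_coeff :: "(real^'a) set \<Rightarrow> 'a::finite list \<Rightarrow> nat list \<Rightarrow> real" where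
  "profile_coeff K l r = euler_char (K \<inter> weight_halfspace l (base_value (Suc CARD('a)) r))
    - euler_char (K \<inter> weight_halfspace l (Suc (base_value (Suc CARD('a)) r)))"

lemma finite_digit_lists: "finite (digit_lists N)"
  unfolding digit_lists_def by (rule finite_lists_length_eq) simp

lemma profile_coeff_matroid_polytope:
  fixes \<B> :: "'a::finite set set"
  assumes M: "is_matroid \<B>" and r: "r \<in> digit_lists (Suc CARD('a))"
  shows "profile_coeff (matroid_polytope \<B>) l r = (if r = rank_profile \<B> l then 1 else 0)"
proof -
  let ?v = "base_value (Suc CARD('a))"
  have "profile_coeff (matroid_polytope \<B>) l r
      = (if ?v r \<le> ?v (rank_profile \<B> l) then 1 else 0) - (if Suc (?v r) \<le> ?v (rank_profile \<B> l) then 1 else 0)"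
  proof -
    have "matroid_polytope \<B> \<inter> weight_halfspace l c = {} \<longleftrightarrow> \<not> c \<le> ?v (rank_profile \<B> l)" for c
      using matroid_polytope_meets_weight_halfspace_iff[OF M] by blast
    then show ?thesis unfolding profile_coeff_def euler_char_def by simp
  qed
  also have "\<dots> = (if ?v r = ?v (rank_profile \<B> l) then 1 else 0)"
    by simp
  also have "?v r = ?v (rank_profile \<B> l) \<longleftrightarrow> r = rank_profile \<B> l"
    using base_value_inj[of r "rank_profile \<B> l"] r rank_profile_in_digit_lists[OF M, of l]
    by (auto simp: digit_lists_def)
  finally show ?thesis .
qed

lemma profile_coeff_relation:
  fixes K :: "'i \<Rightarrow> (real^'a::finite) set"
  assumes "finite I" and "\<And>i. i \<in> I \<Longrightarrow> compact (K i) \<and> convex (K i)"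
    and "\<And>x. (\<Sum>i\<in>I. c i * indicator (K i) x) = 0"
  shows "(\<Sum>i\<in>I. c i * profile_coeff (K i) l r) = 0"
  using euler_relation_Int[OF assms(1,2) closed_weight_halfspace convex_weight_halfspace assms(3)]
  by (simp add: profile_coeff_def right_diff_distrib sum_subtractf)

(* The set K is recovered from f = indicator K as the support of f. *)
definition profile_polynomial :: "(real^'a::finite \<Rightarrow> real) \<Rightarrow> nat list mpoly" where
  "profile_polynomial f = (\<Sum>l\<in>linear_orders. \<Sum>r\<in>digit_lists (Suc CARD('a)).
      Const (profile_coeff {x. f x \<noteq> 0} l r) * Var (jumps r))"

lemma G_eq_profile_polynomial:
  fixes \<B> :: "'a::finite set set"
  assumes M: "is_matroid \<B>"
  shows "G \<B> = profile_polynomial (indicator (matroid_polytope \<B>))"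
proof -
  have supp: "{x. indicator (matroid_polytope \<B>) x \<noteq> (0::real)} = matroid_polytope \<B>"
    by (auto simp: indicator_def)
  have "(\<Sum>r\<in>digit_lists (Suc CARD('a)). Const (profile_coeff (matroid_polytope \<B>) l r) * Var (jumps r))
      = Var (rkjump \<B> l)" if "l \<in> linear_orders" for l
  proof -
    have "Const (profile_coeff (matroid_polytope \<B>) l r) * Var (jumps r)
        = (if r = rank_profile \<B> l then Var (jumps r) else 0)" if "r \<in> digit_lists (Suc CARD('a))" for r
      using profile_coeff_matroid_polytope[OF M that] by simp
    then show ?thesis
      using rank_profile_in_digit_lists[OF M, of l] finite_digit_lists
      by (simp add: sum.delta' jumps_rank_profile[OF that] cong: sum.cong)
  qed
  then show ?thesis unfolding G_def profile_polynomial_def supp by simp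
qed

lemma profile_polynomial_relation:
  fixes F :: "(real^'a::finite \<Rightarrow> real) set"
  assumes "finite F" and K: "\<And>f. f \<in> F \<Longrightarrow> \<exists>K. f = indicator K \<and> compact K \<and> convex K"
    and rel: "lincomb F c = (\<lambda>_. 0)"
  shows "(\<Sum>f\<in>F. Const (c f) * profile_polynomial f) = 0"
proof -
  have ind: "indicator {x. f x \<noteq> 0} = f" and cc: "compact {x. f x \<noteq> 0} \<and> convex {x. f x \<noteq> 0}"
    if "f \<in> F" for f
  proof -
    from K[OF that] obtain K where f: "f = indicator K" "compact K" "convex K" by blast
    then have "{x. f x \<noteq> 0} = K" by (auto simp: indicator_def)
    then show "indicator {x. f x \<noteq> 0} = f" "compact {x. f x \<noteq> 0} \<and> convex {x. f x \<noteq> 0}"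
      using f by simp_all
  qed
  have "(\<Sum>f\<in>F. c f * indicator {y. f y \<noteq> 0} x) = lincomb F c x" for x
    unfolding lincomb_def using ind by (intro sum.cong) auto
  then have "(\<Sum>f\<in>F. c f * indicator {y. f y \<noteq> 0} x) = 0" for x
    using rel by simp
  from profile_coeff_relation[OF assms(1) cc this]
  have "(\<Sum>f\<in>F. c f * profile_coeff {x. f x \<noteq> 0} l r) = 0" for l r .
  then show ?thesis
    by (simp add: profile_polynomial_def sum_Const_mult_expansion)
qed

theorem theorem7p9:
  "\<exists>Ghat :: ((real ^ 'a::finite) \<Rightarrow> real) \<Rightarrow> nat list mpoly.
     linear_on_fspan (fspan {indicator (matroid_polytope \<B>) | \<B> :: 'a set set. is_matroid \<B>}) Ghat \<and>
     (\<forall>\<B> :: 'a set set. is_matroid \<B> \<longrightarrow> G \<B> = Ghat (indicator (matroid_polytope \<B>)))"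
proof -
  let ?S = "{indicator (matroid_polytope \<B>) | \<B> :: 'a set set. is_matroid \<B>}"
  have "\<exists>\<Phi>. linear_on_fspan (fspan ?S) \<Phi> \<and> (\<forall>f\<in>?S. \<Phi> f = profile_polynomial f)"
  proof (rule linear_extension_to_fspan)
    fix F :: "(real^'a \<Rightarrow> real) set" and c
    assume "finite F" "F \<subseteq> ?S" "lincomb F c = (\<lambda>_. 0)"
    then show "(\<Sum>f\<in>F. Const (c f) * profile_polynomial f) = 0"
      by (intro profile_polynomial_relation) (auto intro: compact_matroid_polytope convex_matroid_polytope)
  qed
  then obtain \<Phi> where "linear_on_fspan (fspan ?S) \<Phi>" "\<forall>f\<in>?S. \<Phi> f = profile_polynomial f"
    by blast
  then show ?thesis by (intro exI[of _ \<Phi>]) (auto simp: G_eq_profile_polynomial)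
qed

end
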